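(* There is a constant $c>0$ such that for every sufficiently large $n$ for which $\sqrt{n}$ is an odd integer, every deterministic $\mathsf{Online}$-$\mathsf{LOCAL}$ algorithm that properly 3-colors every $(\sqrt{n}\times\sqrt{n})$ toroidal grid has locality at least $c\sqrt{n}$, and the same holds for $(\sqrt{n}\times\sqrt{n})$ cylindrical grids. That is, the locality of 3-coloring $(\sqrt{n}\times\sqrt{n})$ toroidal and cylindrical grids in $\mathsf{Online}$-$\mathsf{LOCAL}$ is $\Omega(\sqrt{n})$.
   Context: For a graph $G=(V,E)$, $U\subseteq V$ and an integer $T\ge 0$, $\mathcal{B}(U,T)$ denotes the set of nodes at distance at most $T$ from some node of $U$, and $G[U]$ denotes the induced subgraph. The $\mathsf{Online}$-$\mathsf{LOCAL}$ model: an algorithm with locality $T=T(n)$ is deterministic and knows $n$. The adversary chooses an $n$-node input graph $G=(V,E)$ from the input family, assigns distinct identifiers from $\{1,\dots,\mathrm{poly}(n)\}$ to its nodes, and chooses an ordering $\sigma=(v_1,\dots,v_n)$ of $V$. For $i=1,\dots,n$, when $v_i$ is presented, the algorithm must irrevocably assign an output (here a color) to $v_i$ as a function of the sequence $(v_1,\dots,v_i)$ and the induced subgraph $G_i=G\big[\bigcup_{j\le i}\mathcal{B}(v_j,T)\big]$ (with identifiers); thus the algorithm has global memory of everything seen so far. The algorithm solves a coloring problem on an input family if for every choice of the adversary the final coloring is proper and uses only the allowed colors. The locality of a problem is the minimum locality of an algorithm solving it. An $(a\times b)$ simple grid has node set $\{(i,j): i\in[a], j\in[b]\}$, with $(i,j)$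 and $(i',j')$ adjacent iff $|i-i'|+|j-j'|=1$. An $(a\times b)$ cylindrical grid is obtained from it by adding the edges $\{(i,1),(i,b)\}$ for all $i\in[a]$. An $(a\times b)$ toroidal grid is obtained from the cylindrical grid by further adding the edges $\{(1,j),(a,j)\}$ for all $j\in[b]$. *)

theory Defs
  imports Complex_Main
begin

definition grid_nodes :: "nat \<Rightarrow> (nat \<times> nat) set" where
  "grid_nodes k = {(i, j). i < k \<and> j < k}"

definition cyl_adj :: "nat \<Rightarrow> nat \<times> nat \<Rightarrow> nat \<times> nat \<Rightarrow> bool" where
  "cyl_adj k p q \<longleftrightarrow> p \<in> grid_nodes k \<and> q \<in> grid_nodes k \<and> p \<noteq> q \<and>
     ((fst p = fst q \<and> (snd q = (snd p + 1) mod k \<or> snd p = (snd q + 1) mod k)) \<or>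
      (snd p = snd q \<and> (fst q = fst p + 1 \<or> fst p = fst q + 1)))"

definition torus_adj :: "nat \<Rightarrow> nat \<times> nat \<Rightarrow> nat \<times> nat \<Rightarrow> bool" where
  "torus_adj k p q \<longleftrightarrow> p \<in> grid_nodes k \<and> q \<in> grid_nodes k \<and> p \<noteq> q \<and>
     ((fst p = fst q \<and> (snd q = (snd p + 1) mod k \<or> snd p = (snd q + 1) mod k)) \<or>
      (snd p = snd q \<and> (fst q = (fst p + 1) mod k \<or> fst p = (fst q + 1) mod k)))"

fun ball :: "('v \<Rightarrow> 'v \<Rightarrow> bool) \<Rightarrow> 'v \<Rightarrow> nat \<Rightarrow> 'v set" where
  "ball E v 0 = {v}"
| "ball E v (Suc t) = ball E v t \<union> {y. \<exists>x\<in>ball E v t. E x y}"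

text \<open>What the algorithm sees after nodes vs = [v_1,...,v_i] have been presented:
  the identifiers of the presented sequence, and the induced subgraph on the union
  of the T-balls around them, given in terms of identifiers.\<close>
definition view :: "('v \<Rightarrow> 'v \<Rightarrow> bool) \<Rightarrow> ('v \<Rightarrow> nat) \<Rightarrow> nat \<Rightarrow> 'v list
    \<Rightarrow> nat list \<times> nat set \<times> (nat \<times> nat) set" where
  "view E idf T vs =
     (let U = (\<Union>v\<in>set vs. ball E v T)
      in (map idf vs, idf ` U, {(idf x, idf y) | x y. x \<in> U \<and> y \<in> U \<and> E x y}))"

text \<open>A deterministic Online-LOCAL algorithm (for a fixed n) is a function from views to
  outputs.\<close>
definition online_3col_solves ::
  "'v set \<Rightarrow> ('v \<Rightarrow> 'v \<Rightarrow> bool) \<Rightarrow> nat \<Rightarrow> nat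
     \<Rightarrow> (nat list \<times> nat set \<times> (nat \<times> nat) set \<Rightarrow> nat) \<Rightarrow> bool" where
  "online_3col_solves V E N T A \<longleftrightarrow>
     (\<forall>idf \<sigma>. inj_on idf V \<and> idf ` V \<subseteq> {1..N} \<and> distinct \<sigma> \<and> set \<sigma> = V \<longrightarrow>
        (let col = (\<lambda>i. A (view E idf T (take (Suc i) \<sigma>)))
         in (\<forall>i<length \<sigma>. col i < 3) \<and>
            (\<forall>i<length \<sigma>. \<forall>j<length \<sigma>. E (\<sigma> ! i) (\<sigma> ! j) \<longrightarrow> col i \<noteq> col j)))"

end

theory Submission
  imports Defs
begin

text \<open>Walk once around a properly 3-coloured cycle and add up \<open>+1\<close> or \<open>-1\<close> according
  as each colour is followed by its successor or its predecessor modulo 3. This winding number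
  is odd on an odd cycle, changes sign when the cycle is traversed backwards, and is the same
  for any two rows of a properly coloured grid, because the turns around each unit square cancel.

  Present first the rows \<open>T + 1\<close> and \<open>3T + 4\<close> of the grid, in two instances: the grid itself,
  and the grid in which every row from \<open>2T + 3\<close> on is reflected column-wise. Within distance
  \<open>T\<close> of the two rows the instances look alike, so an algorithm of locality \<open>T\<close> colours these
  rows identically in both. Then the winding number of row \<open>3T + 4\<close> equals that of row
  \<open>T + 1\<close> and also its negative, so it vanishes, which is impossible for odd \<open>k\<close> unless
  \<open>k < 4T + 6\<close>.\<close>

definition colour_turn :: "nat \<Rightarrow> nat \<Rightarrow> int" where
  "colour_turn a b = (if b = (a + 1) mod 3 then 1 else -1)"

definition winding :: "nat \<Rightarrow> (nat \<Rightarrow> nat) \<Rightarrow> int" where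
  "winding k g = (\<Sum>j<k. colour_turn (g j) (g (Suc j mod k)))"

definition proper_cycle_colouring :: "nat \<Rightarrow> (nat \<Rightarrow> nat) \<Rightarrow> bool" where
  "proper_cycle_colouring k g \<longleftrightarrow> (\<forall>j<k. g j < 3 \<and> g j \<noteq> g (Suc j mod k))"

lemma less_3_cases: "(a::nat) < 3 \<Longrightarrow> a = 0 \<or> a = 1 \<or> a = 2"
  by arith

lemma colour_turn_swap:
  assumes "a < 3" "b < 3" "a \<noteq> b"
  shows "colour_turn b a = - colour_turn a b"
  using less_3_cases[OF assms(1)] less_3_cases[OF assms(2)] assms(3)
  by (elim disjE) (simp_all add: colour_turn_def)

lemma colour_turn_square:
  assumes "a < 3" "b < 3" "c < 3" "e < 3" "a \<noteq> b" "b \<noteq> e" "a \<noteq> c" "c \<noteq> e"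
  shows "colour_turn a b - colour_turn c e = colour_turn a c - colour_turn b e"
  using less_3_cases[OF assms(1)] less_3_cases[OF assms(2)] less_3_cases[OF assms(3)]
    less_3_cases[OF assms(4)] assms(5-)
  by (elim disjE) (simp_all add: colour_turn_def)

lemma sum_rotate_mod:
  fixes h :: "nat \<Rightarrow> 'a::comm_monoid_add"
  assumes "0 < k"
  shows "(\<Sum>j<k. h (Suc j mod k)) = (\<Sum>j<k. h j)"
proof -
  obtain m where k: "k = Suc m" using assms by (cases k) auto
  have "(\<Sum>j<m. h (Suc j mod Suc m)) = (\<Sum>j<m. h (Suc j))"
    by (intro sum.cong) auto
  then have "(\<Sum>j<Suc m. h (Suc j mod Suc m)) = (\<Sum>j<m. h (Suc j)) + h 0"
    by simp
  also have "\<dots> = (\<Sum>j<Suc m. h j)"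
    by (subst sum.lessThan_Suc_shift) (simp add: add.commute)
  finally show ?thesis unfolding k .
qed

lemma winding_cong:
  "(\<And>j. j < k \<Longrightarrow> g j = g' j) \<Longrightarrow> winding k g = winding k g'"
  unfolding winding_def by (intro sum.cong) auto

lemma winding_odd_nonzero:
  assumes "odd k"
  shows "winding k g \<noteq> 0"
proof -
  have turn_odd: "colour_turn a b mod 2 = 1" for a b
    by (simp add: colour_turn_def)
  have "winding k g mod 2 = (\<Sum>j<k. colour_turn (g j) (g (Suc j mod k)) mod 2) mod 2"
    unfolding winding_def by (simp add: mod_sum_eq)
  also have "\<dots> = int k mod 2"
    by (simp add: turn_odd)
  finally show ?thesis
    using assms by presburger
qed

lemma winding_reflect:
  assumes "0 < k" "proper_cycle_colouring k g"
  shows "winding k (\<lambda>j. g ((k - j) mod k)) = - winding k g"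
proof -
  let ?turn = "\<lambda>u. colour_turn (g u) (g (Suc u mod k))"
  have "colour_turn (g ((k - j) mod k)) (g ((k - Suc j mod k) mod k)) = - ?turn (k - Suc j)"
    if j: "j < k" for j
  proof -
    have "(k - j) mod k = Suc (k - Suc j) mod k" and "(k - Suc j mod k) mod k = k - Suc j"
      using j by (auto simp: mod_if)
    moreover have "k - Suc j < k" using j by simp
    ultimately show ?thesis
      using assms(2) colour_turn_swap unfolding proper_cycle_colouring_def
      by (metis mod_less_divisor[OF assms(1)])
  qed
  then have "winding k (\<lambda>j. g ((k - j) mod k)) = (\<Sum>j<k. - ?turn (k - Suc j))"
    unfolding winding_def by (intro sum.cong) auto
  also have "\<dots> = - (\<Sum>j<k. ?turn (k - Suc j))"
    by (simp add: sum_negf)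
  also have "(\<Sum>j<k. ?turn (k - Suc j)) = winding k g"
    unfolding winding_def by (rule sum.nat_diff_reindex)
  finally show ?thesis .
qed

text \<open>By \<open>colour_turn_square\<close> the difference of the two turn sums telescopes.\<close>
lemma winding_eq_if_pointwise_distinct:
  assumes "0 < k" "proper_cycle_colouring k g" "proper_cycle_colouring k h"
    and distinct: "\<And>j. j < k \<Longrightarrow> g j \<noteq> h j"
  shows "winding k g = winding k h"
proof -
  let ?cross = "\<lambda>j. colour_turn (g j) (h j)"
  have "colour_turn (g j) (g (Suc j mod k)) - colour_turn (h j) (h (Suc j mod k))
      = ?cross j - ?cross (Suc j mod k)" if j: "j < k" for j
  proof -
    have "Suc j mod k < k" using assms(1) by simp
    then show ?thesis
      using j assms(2,3) distinct[of j] distinct[of "Suc j mod k"]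
      unfolding proper_cycle_colouring_def by (intro colour_turn_square) auto
  qed
  then have "winding k g - winding k h = (\<Sum>j<k. ?cross j - ?cross (Suc j mod k))"
    unfolding winding_def sum_subtractf[symmetric] by (intro sum.cong) auto
  also have "\<dots> = 0"
    unfolding sum_subtractf sum_rotate_mod[OF assms(1), of ?cross] by simp
  finally show ?thesis by simp
qed

lemma ball_image_involution:
  assumes involution: "\<And>x. \<psi> (\<psi> x) = x"
    and adj: "\<And>s x y. s < t \<Longrightarrow> x \<in> ball E v s \<Longrightarrow> E (\<psi> x) (\<psi> y) = E x y"
  shows "ball E (\<psi> v) t = \<psi> ` ball E v t"
  using adj
proof (induction t)
  case 0
  then show ?case by simp
next
  case (Suc t)
  have IH: "ball E (\<psi> v) t = \<psi> ` ball E v t"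
    by (metis Suc less_SucI)
  have "{y. \<exists>x\<in>\<psi> ` ball E v t. E x y} = \<psi> ` {y. \<exists>x\<in>ball E v t. E x y}"
  proof (intro set_eqI iffI)
    fix y assume "y \<in> {y. \<exists>x\<in>\<psi> ` ball E v t. E x y}"
    then obtain x where x: "x \<in> ball E v t" "E (\<psi> x) y" by blast
    then have "E x (\<psi> y)"
      using Suc.prems[of t x "\<psi> y"] involution by simp
    then show "y \<in> \<psi> ` {y. \<exists>x\<in>ball E v t. E x y}"
      using x involution by (metis (mono_tags, lifting) image_eqI mem_Collect_eq)
  next
    fix y assume "y \<in> \<psi> ` {y. \<exists>x\<in>ball E v t. E x y}"
    then obtain x y' where "y = \<psi> y'" "x \<in> ball E v t" "E x y'" by blast
    then show "y \<in> {y. \<exists>x\<in>\<psi> ` ball E v t. E x y}"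
      using Suc.prems[of t x y'] by auto
  qed
  then show ?case
    using IH by (simp add: image_Un)
qed

lemma view_image_involution:
  assumes involution: "\<And>x. \<psi> (\<psi> x) = x"
    and balls: "\<And>v. v \<in> set vs \<Longrightarrow> ball E (\<psi> v) T = \<psi> ` ball E v T"
    and adj: "\<And>x y. x \<in> (\<Union>v\<in>set vs. ball E v T) \<Longrightarrow> E (\<psi> x) (\<psi> y) = E x y"
  shows "view E (idf \<circ> \<psi>) T (map \<psi> vs) = view E idf T vs"
proof -
  let ?U = "\<Union>v\<in>set vs. ball E v T"
  have U: "(\<Union>v\<in>set (map \<psi> vs). ball E v T) = \<psi> ` ?U"
    using balls by (simp add: image_UN)
  have edges: "{((idf \<circ> \<psi>) x, (idf \<circ> \<psi>) y) | x y. x \<in> \<psi> ` W \<and> y \<in> \<psi> ` W \<and> E x y}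
      = {(idf x, idf y) | x y. x \<in> W \<and> y \<in> W \<and> E (\<psi> x) (\<psi> y)}" for W
    using involution by (auto; metis image_eqI)
  have "{((idf \<circ> \<psi>) x, (idf \<circ> \<psi>) y) | x y. x \<in> \<psi> ` ?U \<and> y \<in> \<psi> ` ?U \<and> E x y}
      = {(idf x, idf y) | x y. x \<in> ?U \<and> y \<in> ?U \<and> E (\<psi> x) (\<psi> y)}"
    by (rule edges)
  also have "\<dots> = {(idf x, idf y) | x y. x \<in> ?U \<and> y \<in> ?U \<and> E x y}"
    using adj by (metis (no_types, lifting))
  finally show ?thesis
    unfolding view_def Let_def U
    by (simp add: image_comp comp_def involution)
qed

text \<open>Outside the columns \<open>{..<k}\<close> the reflection is the identity, which makes it an
  involution of all of \<open>nat \<times> nat\<close>.\<close>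
definition reflect_column :: "nat \<Rightarrow> nat \<times> nat \<Rightarrow> nat \<times> nat" where
  "reflect_column k p = (fst p, if snd p < k then (k - snd p) mod k else snd p)"

definition reflect_from :: "nat \<Rightarrow> nat \<Rightarrow> nat \<times> nat \<Rightarrow> nat \<times> nat" where
  "reflect_from k r p = (if r \<le> fst p then reflect_column k p else p)"

lemma fst_reflect_column [simp]: "fst (reflect_column k p) = fst p"
  by (simp add: reflect_column_def)

lemma fst_reflect_from [simp]: "fst (reflect_from k r p) = fst p"
  by (simp add: reflect_from_def)

lemma reflect_column_Pair: "j < k \<Longrightarrow> reflect_column k (i, j) = (i, (k - j) mod k)"
  by (simp add: reflect_column_def)

lemma reflect_column_reflect_column [simp]: "reflect_column k (reflect_column k p) = p"
  by (cases p) (auto simp: reflect_column_def mod_if)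

lemma reflect_from_reflect_from [simp]: "reflect_from k r (reflect_from k r p) = p"
  by (simp add: reflect_from_def)

lemma reflect_from_grid_nodes: "reflect_from k r ` grid_nodes k = grid_nodes k"
proof -
  have "reflect_from k r p \<in> grid_nodes k" if "p \<in> grid_nodes k" for p
    using that by (cases p) (auto simp: reflect_from_def reflect_column_def grid_nodes_def)
  then show ?thesis
    by (metis reflect_from_reflect_from image_eqI subsetI subset_antisym image_subset_iff)
qed

definition proper_3colouring :: "'v set \<Rightarrow> ('v \<Rightarrow> 'v \<Rightarrow> bool) \<Rightarrow> ('v \<Rightarrow> nat) \<Rightarrow> bool" where
  "proper_3colouring V E f \<longleftrightarrow> (\<forall>p\<in>V. f p < 3) \<and> (\<forall>p\<in>V. \<forall>q\<in>V. E p q \<longrightarrow> f p \<noteq> f q)"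

lemma online_3col_solves_colouring:
  assumes "online_3col_solves V E N T A" "inj_on idf V" "idf ` V \<subseteq> {1..N}"
    and \<sigma>: "distinct \<sigma>" "set \<sigma> = V"
  obtains f where "proper_3colouring V E f"
    and "\<And>i. i < length \<sigma> \<Longrightarrow> f (\<sigma> ! i) = A (view E idf T (take (Suc i) \<sigma>))"
proof
  define col where "col i = A (view E idf T (take (Suc i) \<sigma>))" for i
  define pos where "pos = inv_into {..<length \<sigma>} ((!) \<sigma>)"
  have inj: "inj_on ((!) \<sigma>) {..<length \<sigma>}"
    using \<sigma>(1) by (simp add: inj_on_nth)
  have onto: "(!) \<sigma> ` {..<length \<sigma>} = V"
    using \<sigma>(2) by (auto simp: in_set_conv_nth)
  have pos_nth: "pos (\<sigma> ! i) = i" if "i < length \<sigma>" for i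
    using inv_into_f_f[OF inj] that by (simp add: pos_def)
  have pos_V: "pos p < length \<sigma> \<and> \<sigma> ! pos p = p" if "p \<in> V" for p
  proof -
    have p: "p \<in> (!) \<sigma> ` {..<length \<sigma>}"
      using that onto by simp
    show ?thesis
      unfolding pos_def using inv_into_into[OF p] f_inv_into_f[OF p] by blast
  qed
  have "inj_on idf V \<and> idf ` V \<subseteq> {1..N} \<and> distinct \<sigma> \<and> set \<sigma> = V"
    using assms by blast
  from assms(1)[unfolded online_3col_solves_def, rule_format, OF this]
  have col3: "\<And>i. i < length \<sigma> \<Longrightarrow> col i < 3"
    and col_proper: "\<And>i j. i < length \<sigma> \<Longrightarrow> j < length \<sigma> \<Longrightarrow> E (\<sigma> ! i) (\<sigma> ! j) \<Longrightarrow> col i \<noteq> col j"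
    by (simp_all add: Let_def col_def)
  show "proper_3colouring V E (col \<circ> pos)"
    unfolding proper_3colouring_def
  proof (intro conjI ballI impI)
    fix p assume "p \<in> V"
    then show "(col \<circ> pos) p < 3"
      using col3 pos_V by simp
  next
    fix p q assume "p \<in> V" "q \<in> V" "E p q"
    then show "(col \<circ> pos) p \<noteq> (col \<circ> pos) q"
      using col_proper pos_V by simp
  qed
  show "(col \<circ> pos) (\<sigma> ! i) = A (view E idf T (take (Suc i) \<sigma>))" if "i < length \<sigma>" for i
    using that by (simp add: pos_nth col_def)
qed

lemma exists_identifiers:
  assumes "finite V" "card V \<le> N"
  obtains idf :: "'v \<Rightarrow> nat" where "inj_on idf V" "idf ` V \<subseteq> {1..N}"
proof -
  obtain f :: "'v \<Rightarrow> nat" and n where f: "f ` V = {i. i < n}" "inj_on f V"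
    using finite_imp_inj_to_nat_seg[OF assms(1)] by blast
  have "n = card V"
    using card_image[OF f(2)] f(1) by simp
  then have "Suc ` {i. i < n} \<subseteq> {1..N}"
    using assms(2) by auto
  then have "(Suc \<circ> f) ` V \<subseteq> {1..N}"
    unfolding image_comp[symmetric] f(1) .
  moreover have "inj_on (Suc \<circ> f) V"
    using f(2) by (simp add: inj_on_def)
  ultimately show ?thesis using that by blast
qed

lemma exists_order_extending:
  assumes "finite V" "distinct xs" "set xs \<subseteq> V"
  obtains ys where "distinct (xs @ ys)" "set (xs @ ys) = V"
proof -
  obtain ys where "set ys = V - set xs" "distinct ys"
    using finite_distinct_list[of "V - set xs"] assms(1) by blast
  then show ?thesis
    using that assms(2,3) by auto
qed

lemma grid_nodes_eq_Times: "grid_nodes k = {..<k} \<times> {..<k}"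
  by (auto simp: grid_nodes_def)

lemma card_grid_nodes: "card (grid_nodes k) = k ^ 2"
  by (simp add: grid_nodes_eq_Times card_cartesian_product power2_eq_square)

lemma finite_grid_nodes: "finite (grid_nodes k)"
  by (simp add: grid_nodes_eq_Times)

text \<open>Rows \<open>0\<close> and \<open>k - 1\<close> are adjacent in the torus, hence the restriction in
  \<open>adj_row_step\<close>.\<close>
locale wrapped_grid =
  fixes k :: nat and E :: "nat \<times> nat \<Rightarrow> nat \<times> nat \<Rightarrow> bool"
  assumes adj_grid_nodes: "E p q \<Longrightarrow> p \<in> grid_nodes k \<and> q \<in> grid_nodes k"
    and adj_reflect_column: "E (reflect_column k p) (reflect_column k q) = E p q"
    and adj_row_step:
      "E p q \<Longrightarrow> 1 \<le> fst p \<Longrightarrow> fst p + 2 \<le> k \<Longrightarrow> fst q \<le> fst p + 1 \<and> fst p \<le> fst q + 1"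
    and adj_horizontal: "i < k \<Longrightarrow> j < k \<Longrightarrow> E (i, j) (i, Suc j mod k)"
    and adj_vertical: "Suc i < k \<Longrightarrow> j < k \<Longrightarrow> E (i, j) (Suc i, j)"
begin

lemma proper_cycle_colouring_row:
  assumes "proper_3colouring (grid_nodes k) E f" "i < k"
  shows "proper_cycle_colouring k (\<lambda>j. f (i, j))"
  using assms adj_horizontal adj_grid_nodes
  unfolding proper_3colouring_def proper_cycle_colouring_def grid_nodes_def by blast

lemma winding_row_eq_winding_row_0:
  assumes f: "proper_3colouring (grid_nodes k) E f"
  shows "i < k \<Longrightarrow> winding k (\<lambda>j. f (i, j)) = winding k (\<lambda>j. f (0, j))"
proof (induction i)
  case 0
  then show ?case by simp
next
  case (Suc i)
  have "f (i, j) \<noteq> f (Suc i, j)" if "j < k" for j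
    using f adj_vertical[OF Suc.prems that] adj_grid_nodes
    unfolding proper_3colouring_def by blast
  then have "winding k (\<lambda>j. f (i, j)) = winding k (\<lambda>j. f (Suc i, j))"
    using Suc.prems f by (intro winding_eq_if_pointwise_distinct proper_cycle_colouring_row) auto
  then show ?case
    using Suc by simp
qed

lemma winding_rows_eq:
  assumes "proper_3colouring (grid_nodes k) E f" "i < k" "i' < k"
  shows "winding k (\<lambda>j. f (i, j)) = winding k (\<lambda>j. f (i', j))"
  using winding_row_eq_winding_row_0[OF assms(1,2)] winding_row_eq_winding_row_0[OF assms(1,3)]
  by (rule trans[OF _ sym])

lemma ball_rows_bounded:
  assumes "t \<le> fst v" "fst v + t + 1 \<le> k" "x \<in> ball E v t"
  shows "fst v \<le> fst x + t \<and> fst x \<le> fst v + t"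
  using assms
proof (induction t arbitrary: x)
  case 0
  then show ?case by simp
next
  case (Suc t)
  show ?case
  proof (cases "x \<in> ball E v t")
    case True
    then show ?thesis using Suc by fastforce
  next
    case False
    then obtain y where y: "y \<in> ball E v t" "E y x"
      using Suc.prems(3) by auto
    have "fst v \<le> fst y + t \<and> fst y \<le> fst v + t"
      using Suc y by fastforce
    moreover from this have "fst x \<le> fst y + 1 \<and> fst y \<le> fst x + 1"
      using adj_row_step[OF y(2)] Suc.prems by auto
    ultimately show ?thesis by auto
  qed
qed

text \<open>The neighbours of such an \<open>x\<close> lie on its side of row \<open>r\<close>, so there
  \<open>reflect_from k r\<close> is either the identity or the column reflection.\<close>
lemma adj_reflect_from_iff:
  assumes "(1 \<le> fst x \<and> fst x + 2 \<le> r \<or> r + 1 \<le> fst x) \<and> fst x + 2 \<le> k"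
  shows "E (reflect_from k r x) (reflect_from k r y) = E x y"
proof -
  let ?\<psi> = "reflect_from k r"
  have same_side: "r \<le> fst y \<longleftrightarrow> r \<le> fst x" if "E x y \<or> E (?\<psi> x) (?\<psi> y)"
    using that adj_row_step[of x y] adj_row_step[of "?\<psi> x" "?\<psi> y"] assms by auto
  show ?thesis
  proof (cases "r \<le> fst x")
    case True
    then show ?thesis
      using same_side adj_reflect_column by (auto simp: reflect_from_def)
  next
    case False
    then show ?thesis
      using same_side by (auto simp: reflect_from_def)
  qed
qed

lemma view_reflect_from_two_rows:
  assumes "4 * T + 6 \<le> k" and rows: "\<forall>v\<in>set vs. fst v = T + 1 \<or> fst v = 3 * T + 4"
  shows "view E (idf \<circ> reflect_from k (2 * T + 3)) T (map (reflect_from k (2 * T + 3)) vs)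
       = view E idf T vs"
proof -
  let ?\<psi> = "reflect_from k (2 * T + 3)"
  have adj: "E (?\<psi> x) (?\<psi> y) = E x y" if "v \<in> set vs" "s \<le> T" "x \<in> ball E v s" for v s x y
  proof -
    have "fst v \<le> fst x + s \<and> fst x \<le> fst v + s"
      using ball_rows_bounded[OF _ _ that(3)] rows that(1,2) assms(1) by force
    then show ?thesis
      using rows that(1,2) assms(1) by (intro adj_reflect_from_iff) auto
  qed
  show ?thesis
  proof (rule view_image_involution)
    fix v assume v: "v \<in> set vs"
    show "ball E (?\<psi> v) T = ?\<psi> ` ball E v T"
      by (rule ball_image_involution) (simp, metis adj[OF v] less_imp_le)
  next
    fix x y assume "x \<in> (\<Union>v\<in>set vs. ball E v T)"
    then show "E (?\<psi> x) (?\<psi> y) = E x y"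
      using adj by blast
  qed simp
qed

lemma online_colourings_two_rows:
  assumes big: "4 * T + 6 \<le> k" and "k ^ 2 \<le> N"
    and sol: "online_3col_solves (grid_nodes k) E N T A"
  obtains f f' where "proper_3colouring (grid_nodes k) E f" "proper_3colouring (grid_nodes k) E f'"
    and "\<And>p. p \<in> grid_nodes k \<Longrightarrow> fst p = T + 1 \<or> fst p = 3 * T + 4 \<Longrightarrow>
           f' (reflect_from k (2 * T + 3) p) = f p"
proof -
  let ?V = "grid_nodes k"
  let ?\<psi> = "reflect_from k (2 * T + 3)"
  define rows where "rows = map (Pair (T + 1)) [0..<k] @ map (Pair (3 * T + 4)) [0..<k]"
  have rows_set: "set rows = {p \<in> ?V. fst p = T + 1 \<or> fst p = 3 * T + 4}"
    using big by (auto simp: rows_def grid_nodes_def)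
  have "distinct rows"
    by (auto simp: rows_def distinct_map inj_on_def)
  then obtain ys where "distinct (rows @ ys)" "set (rows @ ys) = ?V"
    using exists_order_extending[OF finite_grid_nodes] rows_set by blast
  define \<sigma> where "\<sigma> = rows @ ys"
  have \<sigma>: "distinct \<sigma>" "set \<sigma> = ?V"
    unfolding \<sigma>_def by fact+
  obtain idf where idf: "inj_on idf ?V" "idf ` ?V \<subseteq> {1..N}"
    using exists_identifiers[OF finite_grid_nodes] assms(2) by (metis card_grid_nodes)
  obtain f where f: "proper_3colouring ?V E f"
    and f_online: "\<And>i. i < length \<sigma> \<Longrightarrow>
      f (\<sigma> ! i) = A (view E idf T (take (Suc i) \<sigma>))"
    using online_3col_solves_colouring[OF sol idf \<sigma>] by blast
  have inj_\<psi>: "inj ?\<psi>"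
    by (metis injI reflect_from_reflect_from)
  have idf'_inj: "inj_on (idf \<circ> ?\<psi>) ?V"
    using idf(1) reflect_from_grid_nodes by (intro comp_inj_on inj_on_subset[OF inj_\<psi>]) auto
  have idf'_range: "(idf \<circ> ?\<psi>) ` ?V \<subseteq> {1..N}"
    using idf(2) unfolding image_comp[symmetric] reflect_from_grid_nodes .
  have \<sigma>': "distinct (map ?\<psi> \<sigma>)" "set (map ?\<psi> \<sigma>) = ?V"
    using \<sigma> inj_on_subset[OF inj_\<psi>] by (simp_all add: distinct_map reflect_from_grid_nodes)
  obtain f' where f': "proper_3colouring ?V E f'"
    and f'_online: "\<And>i. i < length (map ?\<psi> \<sigma>) \<Longrightarrow>
      f' (map ?\<psi> \<sigma> ! i) = A (view E (idf \<circ> ?\<psi>) T (take (Suc i) (map ?\<psi> \<sigma>)))"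
    using online_3col_solves_colouring[OF sol idf'_inj idf'_range \<sigma>'] by blast
  have "f' (?\<psi> p) = f p" if "p \<in> ?V" "fst p = T + 1 \<or> fst p = 3 * T + 4" for p
  proof -
    have "p \<in> set rows"
      using that rows_set by blast
    then obtain i where i: "i < length rows" "rows ! i = p"
      by (metis in_set_conv_nth)
    have prefix: "take (Suc i) \<sigma> = take (Suc i) rows" and nth: "\<sigma> ! i = p" and "i < length \<sigma>"
      using i by (simp_all add: \<sigma>_def nth_append)
    have "f' (?\<psi> p) = A (view E (idf \<circ> ?\<psi>) T (map ?\<psi> (take (Suc i) rows)))"
      using f'_online[of i] i nth \<open>i < length \<sigma>\<close> by (simp add: take_map prefix)
    also have "\<dots> = A (view E idf T (take (Suc i) rows))"
    proof (rule arg_cong[where f = A], rule view_reflect_from_two_rows[OF big])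
      show "\<forall>v\<in>set (take (Suc i) rows). fst v = T + 1 \<or> fst v = 3 * T + 4"
        using rows_set set_take_subset[of "Suc i" rows] by blast
    qed
    also have "\<dots> = f p"
      using f_online[of i] nth \<open>i < length \<sigma>\<close> by (simp add: prefix)
    finally show ?thesis .
  qed
  then show ?thesis
    using that f f' by blast
qed

lemma online_3col_locality:
  assumes "odd k" "k ^ 2 \<le> N" "online_3col_solves (grid_nodes k) E N T A"
  shows "k < 4 * T + 6"
proof (rule ccontr)
  assume "\<not> k < 4 * T + 6"
  then have big: "4 * T + 6 \<le> k" by simp
  let ?\<psi> = "reflect_from k (2 * T + 3)"
  obtain f f' where f: "proper_3colouring (grid_nodes k) E f"
    and f': "proper_3colouring (grid_nodes k) E f'"
    and agree: "\<And>p. p \<in> grid_nodes k \<Longrightarrow> fst p = T + 1 \<or> fst p = 3 * T + 4 \<Longrightarrow> f' (?\<psi> p) = f p"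
    using online_colourings_two_rows[OF big assms(2,3)] by blast
  have k0: "0 < k" and rows: "T + 1 < k" "3 * T + 4 < k"
    using big by auto
  have "f' (T + 1, j) = f (T + 1, j)" if "j < k" for j
    using agree[of "(T + 1, j)"] that rows by (simp add: grid_nodes_def reflect_from_def)
  then have low: "winding k (\<lambda>j. f' (T + 1, j)) = winding k (\<lambda>j. f (T + 1, j))"
    by (rule winding_cong)
  have "f' (3 * T + 4, j) = f (3 * T + 4, (k - j) mod k)" if "j < k" for j
  proof -
    have "?\<psi> (3 * T + 4, j) \<in> grid_nodes k"
      using reflect_from_grid_nodes that rows by (auto simp: grid_nodes_def)
    then have "f' (3 * T + 4, j) = f (?\<psi> (3 * T + 4, j))"
      using agree[of "?\<psi> (3 * T + 4, j)"] by simp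
    also have "?\<psi> (3 * T + 4, j) = (3 * T + 4, (k - j) mod k)"
      using that by (simp add: reflect_from_def reflect_column_Pair)
    finally show ?thesis .
  qed
  then have "winding k (\<lambda>j. f' (3 * T + 4, j)) = winding k (\<lambda>j. f (3 * T + 4, (k - j) mod k))"
    by (rule winding_cong)
  also have "\<dots> = - winding k (\<lambda>j. f (3 * T + 4, j))"
    using winding_reflect[OF k0 proper_cycle_colouring_row[OF f rows(2)]] .
  finally have high: "winding k (\<lambda>j. f' (3 * T + 4, j)) = - winding k (\<lambda>j. f (3 * T + 4, j))" .
  have "winding k (\<lambda>j. f (3 * T + 4, j)) = winding k (\<lambda>j. f (T + 1, j))"
    "winding k (\<lambda>j. f' (3 * T + 4, j)) = winding k (\<lambda>j. f' (T + 1, j))"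
    using winding_rows_eq[OF f rows(2,1)] winding_rows_eq[OF f' rows(2,1)] .
  then have "winding k (\<lambda>j. f (3 * T + 4, j)) = 0"
    using low high by simp
  then show False
    using winding_odd_nonzero[OF assms(1)] by blast
qed

lemma online_3col_locality_ge:
  assumes "odd k" "12 \<le> k" "k ^ 2 \<le> N" "online_3col_solves (grid_nodes k) E N T A"
  shows "real k / 8 \<le> real T"
proof -
  have "k \<le> 8 * T"
    using online_3col_locality[OF assms(1,3,4)] assms(2) by linarith
  then show ?thesis by simp
qed

end

lemma reflect_mod_eq_iff:
  fixes j j' k :: nat
  assumes "j < k" "j' < k"
  shows "(k - j) mod k = (k - j') mod k \<longleftrightarrow> j = j'"
  using assms by (cases "j = 0"; cases "j' = 0") (auto simp: mod_if)

lemma reflect_Suc_mod_iff: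
  fixes j j' k :: nat
  assumes "j < k" "j' < k"
  shows "(k - j') mod k = Suc ((k - j) mod k) mod k \<longleftrightarrow> j = Suc j' mod k"
  using assms by (cases "j = 0"; cases "j' = 0") (auto simp: mod_if)

lemma torus_adj_reflect_column:
  "torus_adj k (reflect_column k p) (reflect_column k q) = torus_adj k p q"
proof (cases "snd p < k \<and> snd q < k")
  case True
  then show ?thesis
    by (cases p, cases q)
       (simp add: torus_adj_def grid_nodes_def reflect_column_Pair reflect_mod_eq_iff reflect_Suc_mod_iff; blast)
next
  case False
  then show ?thesis
    by (auto simp: torus_adj_def grid_nodes_def reflect_column_def)
qed

lemma cyl_adj_reflect_column:
  "cyl_adj k (reflect_column k p) (reflect_column k q) = cyl_adj k p q"
proof (cases "snd p < k \<and> snd q < k")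
  case True
  then show ?thesis
    by (cases p, cases q)
       (simp add: cyl_adj_def grid_nodes_def reflect_column_Pair reflect_mod_eq_iff reflect_Suc_mod_iff; blast)
next
  case False
  then show ?thesis
    by (auto simp: cyl_adj_def grid_nodes_def reflect_column_def)
qed

lemma wrapped_grid_torus:
  assumes "3 \<le> k"
  shows "wrapped_grid k (torus_adj k)"
proof
  fix p q
  show "torus_adj k p q \<Longrightarrow> p \<in> grid_nodes k \<and> q \<in> grid_nodes k"
    by (simp add: torus_adj_def)
  show "torus_adj k (reflect_column k p) (reflect_column k q) = torus_adj k p q"
    by (rule torus_adj_reflect_column)
  assume "torus_adj k p q" "1 \<le> fst p" "fst p + 2 \<le> k"
  then show "fst q \<le> fst p + 1 \<and> fst p \<le> fst q + 1"
    by (cases p, cases q) (auto simp: torus_adj_def grid_nodes_def mod_if split: if_splits)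
next
  fix i j assume "i < k" "j < k"
  then show "torus_adj k (i, j) (i, Suc j mod k)"
    using assms by (auto simp: torus_adj_def grid_nodes_def mod_if)
next
  fix i j assume "Suc i < k" "j < k"
  then show "torus_adj k (i, j) (Suc i, j)"
    by (simp add: torus_adj_def grid_nodes_def)
qed

lemma wrapped_grid_cyl:
  assumes "3 \<le> k"
  shows "wrapped_grid k (cyl_adj k)"
proof
  fix p q
  show "cyl_adj k p q \<Longrightarrow> p \<in> grid_nodes k \<and> q \<in> grid_nodes k"
    by (simp add: cyl_adj_def)
  show "cyl_adj k (reflect_column k p) (reflect_column k q) = cyl_adj k p q"
    by (rule cyl_adj_reflect_column)
  show "cyl_adj k p q \<Longrightarrow> fst q \<le> fst p + 1 \<and> fst p \<le> fst q + 1"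
    by (auto simp: cyl_adj_def)
next
  fix i j assume "i < k" "j < k"
  then show "cyl_adj k (i, j) (i, Suc j mod k)"
    using assms by (auto simp: cyl_adj_def grid_nodes_def mod_if)
next
  fix i j assume "Suc i < k" "j < k"
  then show "cyl_adj k (i, j) (Suc i, j)"
    by (simp add: cyl_adj_def grid_nodes_def)
qed

theorem theorem2:
  fixes d :: nat
  assumes "d \<ge> 1"
  shows "\<exists>c::real>0. \<exists>n0::nat. \<forall>n k T A. n \<ge> n0 \<and> n = k ^ 2 \<and> odd k \<longrightarrow>
           (online_3col_solves (grid_nodes k) (torus_adj k) (n ^ d) T A \<longrightarrow> real T \<ge> c * sqrt (real n)) \<and>
           (online_3col_solves (grid_nodes k) (cyl_adj k) (n ^ d) T A \<longrightarrow> real T \<ge> c * sqrt (real n))"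
proof (intro exI[of _ "1/8 :: real"] conjI exI[of _ "144 :: nat"] allI impI)
  fix n k T :: nat and A
  assume n: "144 \<le> n \<and> n = k ^ 2 \<and> odd k"
  have "12 \<le> k"
    using power2_le_imp_le[of "12 :: nat" k] n by simp
  have "n ^ 1 \<le> n ^ d"
    using n assms by (intro power_increasing) auto
  then have N: "k ^ 2 \<le> n ^ d"
    using n by simp
  have sqrt_n: "1/8 * sqrt (real n) = real k / 8"
    using n by simp
  show "online_3col_solves (grid_nodes k) (torus_adj k) (n ^ d) T A \<Longrightarrow> 1/8 * sqrt (real n) \<le> real T"
    using wrapped_grid.online_3col_locality_ge[OF wrapped_grid_torus _ _ N] n \<open>12 \<le> k\<close> sqrt_n
    by simp
  show "online_3col_solves (grid_nodes k) (cyl_adj k) (n ^ d) T A \<Longrightarrow> 1/8 * sqrt (real n) \<le> real T"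
    using wrapped_grid.online_3col_locality_ge[OF wrapped_grid_cyl _ _ N] n \<open>12 \<le> k\<close> sqrt_n
    by simp
qed simp

end
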